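(* Let $r\ge 2$, let $H$ be a digraph (possibly with loops) and let $D$ be an $H$-colored $r$-partite tournament. If $k \geq 5$, then $D$ has a $(k,H)$-kernel.
   Context: All digraphs are finite. An $r$-partite tournament is a digraph whose vertex set is partitioned into $r$ disjoint independent sets such that every two vertices in different classes are joined by exactly one arc (an asymmetric arc). $D$ has no loops and comes with a map $\rho: A(D)\to V(H)$. For a walk $W=(x_0,\ldots,x_n)$ in $D$, there is an obstruction on $x_i$ if $(\rho(x_{i-1},x_i),\rho(x_i,x_{i+1})) \notin A(H)$; for an open walk this is considered at internal vertices $x_i$, $1\le i\le n-1$, for a closed walk at all $i\in\{0,\ldots,n-1\}$ with indices modulo $n$. $O_H(W)$ is the set of indices with an obstruction; the $H$-length is $l_H(W)=|O_H(W)|+1$ for open $W$ and $|O_H(W)|$ for closed $W$. A $(k,H)$-kernel ($k\ge2$) is a set $S\subseteq V(D)$ such that for every two distinct $u,v\in S$ every directed $uv$-path in $D$ has $H$-length at least $k$, and for every $x\in V(D)\setminus S$ there is a directed path from $x$ to a vertex of $S$ of $H$-length at most $k-1$. *)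

theory Defs
  imports Main
begin

definition r_partite_tournament ::
  "nat \<Rightarrow> 'a set \<Rightarrow> ('a \<times> 'a) set \<Rightarrow> bool" where
  "r_partite_tournament r V A \<longleftrightarrow> finite V \<and> A \<subseteq> V \<times> V \<and>
     (\<exists>P :: nat \<Rightarrow> 'a set.
        (\<forall>i<r. P i \<noteq> {}) \<and>
        (\<Union>i<r. P i) = V \<and>
        (\<forall>i<r. \<forall>j<r. i \<noteq> j \<longrightarrow> P i \<inter> P j = {}) \<and>
        (\<forall>i<r. \<forall>u\<in>P i. \<forall>v\<in>P i. (u, v) \<notin> A) \<and>
        (\<forall>i<r. \<forall>j<r. i \<noteq> j \<longrightarrow> (\<forall>u\<in>P i. \<forall>v\<in>P j.
            ((u, v) \<in> A \<longleftrightarrow> (v, u) \<notin> A))))"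

definition H_colored :: "('a \<times> 'a) set \<Rightarrow> 'c set \<Rightarrow> ('c \<times> 'c) set \<Rightarrow> ('a \<times> 'a \<Rightarrow> 'c) \<Rightarrow> bool" where
  "H_colored A VH AH \<rho> \<longleftrightarrow> finite VH \<and> AH \<subseteq> VH \<times> VH \<and> (\<forall>e\<in>A. \<rho> e \<in> VH)"

definition is_path :: "('a \<times> 'a) set \<Rightarrow> 'a list \<Rightarrow> bool" where
  "is_path A xs \<longleftrightarrow> xs \<noteq> [] \<and> distinct xs \<and>
     (\<forall>i. Suc i < length xs \<longrightarrow> (xs ! i, xs ! Suc i) \<in> A)"

definition obstructions :: "('c \<times> 'c) set \<Rightarrow> ('a \<times> 'a \<Rightarrow> 'c) \<Rightarrow> 'a list \<Rightarrow> nat set" where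
  "obstructions AH \<rho> xs = {i. 1 \<le> i \<and> Suc i < length xs \<and>
      (\<rho> (xs ! (i - 1), xs ! i), \<rho> (xs ! i, xs ! Suc i)) \<notin> AH}"

definition H_length :: "('c \<times> 'c) set \<Rightarrow> ('a \<times> 'a \<Rightarrow> 'c) \<Rightarrow> 'a list \<Rightarrow> nat" where
  "H_length AH \<rho> xs = card (obstructions AH \<rho> xs) + 1"

definition kH_kernel ::
  "nat \<Rightarrow> 'a set \<Rightarrow> ('a \<times> 'a) set \<Rightarrow> ('c \<times> 'c) set \<Rightarrow> ('a \<times> 'a \<Rightarrow> 'c) \<Rightarrow> 'a set \<Rightarrow> bool" where
  "kH_kernel k V A AH \<rho> S \<longleftrightarrow> S \<subseteq> V \<and>
     (\<forall>u\<in>S. \<forall>v\<in>S. u \<noteq> v \<longrightarrow>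
        (\<forall>xs. is_path A xs \<and> hd xs = u \<and> last xs = v \<longrightarrow> H_length AH \<rho> xs \<ge> k)) \<and>
     (\<forall>x\<in>V - S. \<exists>xs. is_path A xs \<and> hd xs = x \<and> last xs \<in> S \<and>
        H_length AH \<rho> xs \<le> k - 1)"

end

theory Submission imports Defs begin

text \<open>A path with \<open>m \<ge> 1\<close> arcs has H-length at most \<open>m\<close> whatever the colouring, so for
  \<open>k \<ge> 5\<close> it suffices to find a set \<open>S\<close> with no directed path between distinct members
  that every other vertex reaches by a walk of at most 4 arcs.

  If \<open>D\<close> has sinks, let \<open>S\<close> be the set of all sinks: a vertex outside the class of a sink
  \<open>t\<close> has an arc to \<open>t\<close>, and a non-sink of that class reaches \<open>t\<close> through any
  out-neighbour. Otherwise let \<open>S = {v}\<close>, where \<open>v\<close> maximises the number of vertices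
  reaching it by a walk of 1 or 2 arcs. A vertex \<open>a\<close> of another class with no walk of at
  most 3 arcs to \<open>v\<close> would be entered by \<open>v\<close> and would be reached within 2 arcs by \<open>v\<close>
  and by everything reaching \<open>v\<close> within 2 arcs, contradicting maximality; the vertices of
  the class of \<open>v\<close> then reach \<open>v\<close> within 4 arcs through an out-neighbour.\<close>

lemma is_path_iff:
  "is_path A xs \<longleftrightarrow> xs \<noteq> [] \<and> distinct xs \<and> successively (\<lambda>x y. (x, y) \<in> A) xs"
  by (auto simp: is_path_def successively_conv_nth)

lemma not_is_path_Nil [simp]: "\<not> is_path A []"
  by (simp add: is_path_def)

lemma is_path_Cons:
  "is_path A (x # xs) \<longleftrightarrow> x \<notin> set xs \<and> (xs = [] \<or> (x, hd xs) \<in> A \<and> is_path A xs)"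
  by (auto simp: is_path_iff successively_Cons)

lemma is_path_imp_rtrancl: "is_path A xs \<Longrightarrow> (hd xs, last xs) \<in> A\<^sup>*"
proof (induction xs)
  case (Cons x xs)
  then show ?case
    by (cases xs) (auto simp: is_path_Cons intro: converse_rtrancl_into_rtrancl)
qed simp

lemma relpow_imp_path:
  "(x, y) \<in> A ^^ n \<Longrightarrow> \<exists>xs. is_path A xs \<and> hd xs = x \<and> last xs = y \<and> length xs \<le> Suc n"
proof (induction n arbitrary: x)
  case 0
  then show ?case by (intro exI[of _ "[x]"]) (simp add: is_path_def)
next
  case (Suc n)
  obtain z where "(x, z) \<in> A" and "(z, y) \<in> A ^^ n"
    using relpow_Suc_D2[OF Suc.prems] by blast
  obtain zs where zs: "is_path A zs" "hd zs = z" "last zs = y" "length zs \<le> Suc n"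
    using Suc.IH[OF \<open>(z, y) \<in> A ^^ n\<close>] by blast
  show ?case
  proof (cases "x \<in> set zs")
    case True
    then obtain as bs where zs_split: "zs = as @ x # bs" by (meson split_list)
    then have "is_path A (x # bs)"
      using zs(1) by (simp add: is_path_iff successively_append_iff)
    moreover have "last (x # bs) = y" and "length (x # bs) \<le> Suc n"
      using zs(3,4) zs_split by auto
    ultimately show ?thesis by fastforce
  next
    case False
    then show ?thesis
      using zs \<open>(x, z) \<in> A\<close> by (intro exI[of _ "x # zs"]) (auto simp: is_path_Cons)
  qed
qed

lemma H_length_le: "H_length AH \<rho> xs \<le> max 1 (length xs - 1)"
proof -
  have "obstructions AH \<rho> xs \<subseteq> {1..<length xs - 1}"
    unfolding obstructions_def by auto
  then have "card (obstructions AH \<rho> xs) \<le> length xs - 2"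
    by (metis card_atLeastLessThan card_mono diff_diff_left finite_atLeastLessThan one_add_one)
  then show ?thesis unfolding H_length_def max_def by (simp split: if_split) arith
qed

lemma relpow_imp_short_path:
  assumes "(x, y) \<in> A ^^ n"
  shows "\<exists>xs. is_path A xs \<and> hd xs = x \<and> last xs = y \<and> H_length AH \<rho> xs \<le> max 1 n"
proof -
  obtain xs where xs: "is_path A xs" "hd xs = x" "last xs = y" "length xs \<le> Suc n"
    using relpow_imp_path[OF assms] by blast
  have "H_length AH \<rho> xs \<le> max 1 n"
    using H_length_le[of AH \<rho> xs] xs(4) unfolding max_def by (simp split: if_splits) arith
  with xs show ?thesis by blast
qed

lemma kH_kernelI:
  assumes "2 \<le> k" and "S \<subseteq> V"
    and independent: "\<And>u w. u \<in> S \<Longrightarrow> w \<in> S \<Longrightarrow> (u, w) \<in> A\<^sup>* \<Longrightarrow> u = w"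
    and absorbing: "\<And>x. x \<in> V - S \<Longrightarrow> \<exists>y\<in>S. \<exists>n<k. (x, y) \<in> A ^^ n"
  shows "kH_kernel k V A AH \<rho> S"
  unfolding kH_kernel_def
proof (intro conjI ballI allI impI)
  show "S \<subseteq> V" by fact
next
  fix u w xs
  assume "u \<in> S" "w \<in> S" "u \<noteq> w" and xs: "is_path A xs \<and> hd xs = u \<and> last xs = w"
  then have "(u, w) \<notin> A\<^sup>*"
    using independent by blast
  with xs show "k \<le> H_length AH \<rho> xs"
    using is_path_imp_rtrancl by blast
next
  fix x
  assume "x \<in> V - S"
  then obtain y n where "y \<in> S" "n < k" "(x, y) \<in> A ^^ n"
    using absorbing by blast
  obtain xs where xs: "is_path A xs" "hd xs = x" "last xs = y" "H_length AH \<rho> xs \<le> max 1 n"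
    using relpow_imp_short_path[OF \<open>(x, y) \<in> A ^^ n\<close>] by blast
  have "H_length AH \<rho> xs \<le> k - 1"
    using xs(4) \<open>n < k\<close> \<open>2 \<le> k\<close> unfolding max_def by (simp split: if_splits)
  with xs \<open>y \<in> S\<close> show "\<exists>xs. is_path A xs \<and> hd xs = x \<and> last xs \<in> S \<and> H_length AH \<rho> xs \<le> k - 1"
    by (intro exI[of _ xs]) simp
qed

locale multipartite_tournament =
  fixes V :: "'a set" and A :: "('a \<times> 'a) set" and part :: "'a \<Rightarrow> 'p"
  assumes finite_V: "finite V"
    and arcs_in_V: "A \<subseteq> V \<times> V"
    and arc_between_parts: "(u, w) \<in> A \<Longrightarrow> part u \<noteq> part w"
    and parts_adjacent: "u \<in> V \<Longrightarrow> w \<in> V \<Longrightarrow> part u \<noteq> part w \<Longrightarrow> (u, w) \<in> A \<or> (w, u) \<in> A"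

lemma r_partite_tournament_imp_multipartite:
  assumes "r_partite_tournament r V A"
  shows "\<exists>part :: 'a \<Rightarrow> nat. multipartite_tournament V A part"
proof -
  obtain P :: "nat \<Rightarrow> 'a set" where "finite V" and "A \<subseteq> V \<times> V"
    and cover: "(\<Union>i<r. P i) = V"
    and independent: "\<forall>i<r. \<forall>u\<in>P i. \<forall>v\<in>P i. (u, v) \<notin> A"
    and complete: "\<forall>i<r. \<forall>j<r. i \<noteq> j \<longrightarrow> (\<forall>u\<in>P i. \<forall>v\<in>P j. ((u, v) \<in> A \<longleftrightarrow> (v, u) \<notin> A))"
    using assms unfolding r_partite_tournament_def by (elim conjE exE) (rule that; assumption)
  define part where "part u = (SOME i. i < r \<and> u \<in> P i)" for u
  have part: "part u < r \<and> u \<in> P (part u)" if u: "u \<in> V" for u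
  proof -
    obtain i where "i < r \<and> u \<in> P i"
      using u cover by blast
    then show ?thesis
      unfolding part_def by (rule someI)
  qed
  have "multipartite_tournament V A part"
  proof
    show "part u \<noteq> part w" if "(u, w) \<in> A" for u w
    proof -
      have "u \<in> V" "w \<in> V"
        using that \<open>A \<subseteq> V \<times> V\<close> by auto
      then show ?thesis
        using part[of u] part[of w] independent that by metis
    qed
    show "(u, w) \<in> A \<or> (w, u) \<in> A" if "u \<in> V" "w \<in> V" "part u \<noteq> part w" for u w
      using part[OF that(1)] part[OF that(2)] complete that(3) by blast
  qed fact+
  then show ?thesis by blast
qed

definition sinks :: "'a set \<Rightarrow> ('a \<times> 'a) set \<Rightarrow> 'a set" where
  "sinks V A = {t \<in> V. \<forall>y. (t, y) \<notin> A}"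

definition in_nbhd2 :: "('a \<times> 'a) set \<Rightarrow> 'a \<Rightarrow> 'a set" where
  "in_nbhd2 A v = {u. u \<noteq> v \<and> (u, v) \<in> A \<union> A O A}"

context multipartite_tournament
begin

lemma irrefl_arcs: "(u, u) \<notin> A"
  using arc_between_parts by blast

lemma arc_from_other_part:
  assumes "u \<in> V" "w \<in> V" "part u \<noteq> part w" "(w, u) \<notin> A"
  shows "(u, w) \<in> A"
  using assms parts_adjacent by blast

lemma reaches_sink_in_two:
  assumes "t \<in> sinks V A" and "x \<in> V - sinks V A"
  shows "\<exists>n\<le>2. (x, t) \<in> A ^^ n"
proof (cases "part x = part t")
  case False
  then have "(x, t) \<in> A"
    using assms arc_from_other_part unfolding sinks_def by blast
  then show ?thesis by (intro exI[of _ 1]) simp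
next
  case True
  obtain y where "(x, y) \<in> A"
    using assms(2) unfolding sinks_def by blast
  then have "part y \<noteq> part t" and "y \<in> V"
    using True arc_between_parts[OF \<open>(x, y) \<in> A\<close>] arcs_in_V by auto
  then have "(y, t) \<in> A"
    using assms(1) arc_from_other_part unfolding sinks_def by blast
  with \<open>(x, y) \<in> A\<close> have "(x, t) \<in> A ^^ 2"
    by (auto simp: numeral_2_eq_2)
  then show ?thesis by blast
qed

lemma finite_in_nbhd2: "finite (in_nbhd2 A v)"
  using arcs_in_V by (intro finite_subset[OF _ finite_V]) (auto simp: in_nbhd2_def)

lemma in_nbhd2_iff:
  "u \<in> in_nbhd2 A v \<longleftrightarrow> u \<noteq> v \<and> ((u, v) \<in> A \<or> (\<exists>w. (u, w) \<in> A \<and> (w, v) \<in> A))"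
  by (auto simp: in_nbhd2_def)

lemma insert_in_nbhd2_subset:
  assumes "a \<in> V" "v \<in> V" "part a \<noteq> part v"
    and far: "\<And>n. n \<le> 3 \<Longrightarrow> (a, v) \<notin> A ^^ n"
  shows "insert v (in_nbhd2 A v) \<subseteq> in_nbhd2 A a"
proof
  have no1: "(a, v) \<notin> A"
    using far[of 1] by simp
  have no2: "(w, v) \<notin> A" if "(a, w) \<in> A" for w
    using far[of 2] that by (auto simp: numeral_2_eq_2)
  have no3: "(w, v) \<notin> A" if "(a, b) \<in> A" "(b, w) \<in> A" for b w
    using far[of 3] that by (auto simp: numeral_3_eq_3)
  have "(v, a) \<in> A"
    using assms(1-3) no1 arc_from_other_part by metis
  have "a \<notin> in_nbhd2 A v"
    using no1 no2 by (auto simp: in_nbhd2_iff)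
  fix u
  assume "u \<in> insert v (in_nbhd2 A v)"
  then consider "u = v" | "u \<in> in_nbhd2 A v" by blast
  then show "u \<in> in_nbhd2 A a"
  proof cases
    case 1
    then show ?thesis
      using \<open>(v, a) \<in> A\<close> irrefl_arcs by (auto simp: in_nbhd2_iff)
  next
    case 2
    then have "u \<noteq> a" and "u \<in> V"
      using \<open>a \<notin> in_nbhd2 A v\<close> arcs_in_V by (auto simp: in_nbhd2_iff)
    show ?thesis
    proof (cases "part u = part a")
      case False
      have "(a, u) \<notin> A"
        using 2 no2 no3 by (auto simp: in_nbhd2_iff)
      then have "(u, a) \<in> A"
        using \<open>u \<in> V\<close> \<open>a \<in> V\<close> False arc_from_other_part by blast
      then show ?thesis
        using \<open>u \<noteq> a\<close> by (simp add: in_nbhd2_iff)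
    next
      case True
      show ?thesis
      proof (cases "(u, v) \<in> A")
        case True
        then show ?thesis
          using \<open>(v, a) \<in> A\<close> \<open>u \<noteq> a\<close> by (auto simp: in_nbhd2_iff)
      next
        case False
        then obtain w where "(u, w) \<in> A" "(w, v) \<in> A"
          using 2 by (auto simp: in_nbhd2_iff)
        then have "part w \<noteq> part a" and "w \<in> V" and "(a, w) \<notin> A"
          using \<open>part u = part a\<close> arc_between_parts[OF \<open>(u, w) \<in> A\<close>] arcs_in_V no2 by auto
        then have "(w, a) \<in> A"
          using \<open>a \<in> V\<close> arc_from_other_part by blast
        then show ?thesis
          using \<open>(u, w) \<in> A\<close> \<open>u \<noteq> a\<close> by (auto simp: in_nbhd2_iff)
      qed
    qed
  qed
qed

lemma max_in_nbhd2_reached_from_other_parts: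
  assumes "v \<in> V" and max: "\<forall>y\<in>V. card (in_nbhd2 A y) \<le> card (in_nbhd2 A v)"
    and "a \<in> V" "part a \<noteq> part v"
  shows "\<exists>n\<le>3. (a, v) \<in> A ^^ n"
proof (rule ccontr)
  assume "\<not> ?thesis"
  then have "insert v (in_nbhd2 A v) \<subseteq> in_nbhd2 A a"
    using assms by (intro insert_in_nbhd2_subset) auto
  then have "card (insert v (in_nbhd2 A v)) \<le> card (in_nbhd2 A a)"
    by (rule card_mono[OF finite_in_nbhd2])
  moreover have "card (insert v (in_nbhd2 A v)) = Suc (card (in_nbhd2 A v))"
    using finite_in_nbhd2 by (simp add: in_nbhd2_iff)
  moreover have "card (in_nbhd2 A a) \<le> card (in_nbhd2 A v)"
    using max \<open>a \<in> V\<close> by blast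
  ultimately show False by linarith
qed

lemma max_in_nbhd2_absorbs:
  assumes "sinks V A = {}"
    and "v \<in> V" and max: "\<forall>y\<in>V. card (in_nbhd2 A y) \<le> card (in_nbhd2 A v)"
    and "x \<in> V"
  shows "\<exists>n\<le>4. (x, v) \<in> A ^^ n"
proof (cases "part x = part v")
  case False
  then obtain n where "n \<le> 3" "(x, v) \<in> A ^^ n"
    using max_in_nbhd2_reached_from_other_parts[OF \<open>v \<in> V\<close> max \<open>x \<in> V\<close>] by blast
  then show ?thesis
    by (intro exI[of _ n]) simp
next
  case True
  obtain y where "(x, y) \<in> A"
    using assms(1,4) unfolding sinks_def by blast
  then have "y \<in> V" and "part y \<noteq> part v"
    using True arc_between_parts[OF \<open>(x, y) \<in> A\<close>] arcs_in_V by auto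
  then obtain n where "n \<le> 3" "(y, v) \<in> A ^^ n"
    using max_in_nbhd2_reached_from_other_parts[OF \<open>v \<in> V\<close> max] by blast
  with \<open>(x, y) \<in> A\<close> have "(x, v) \<in> A ^^ Suc n"
    by (blast intro: relpow_Suc_I2)
  then show ?thesis
    using \<open>n \<le> 3\<close> by (intro exI[of _ "Suc n"]) simp
qed

lemma exists_independent_absorbing_set:
  "\<exists>S \<subseteq> V. (\<forall>u\<in>S. \<forall>w\<in>S. (u, w) \<in> A\<^sup>* \<longrightarrow> u = w) \<and>
     (\<forall>x\<in>V - S. \<exists>y\<in>S. \<exists>n\<le>4. (x, y) \<in> A ^^ n)"
proof (cases "V \<noteq> {} \<and> sinks V A = {}")
  case True
  obtain v where "v \<in> V" and "card (in_nbhd2 A v) = Max ((\<lambda>y. card (in_nbhd2 A y)) ` V)"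
    using Max_in[of "(\<lambda>y. card (in_nbhd2 A y)) ` V"] finite_V True by fastforce
  then have max: "\<forall>y\<in>V. card (in_nbhd2 A y) \<le> card (in_nbhd2 A v)"
    by (simp add: finite_V)
  then show ?thesis
    using \<open>v \<in> V\<close> max_in_nbhd2_absorbs[OF _ \<open>v \<in> V\<close> max] True by (intro exI[of _ "{v}"]) auto
next
  case False
  have "u = w" if "u \<in> sinks V A" "(u, w) \<in> A\<^sup>*" for u w
    using that(2) by (cases rule: converse_rtranclE) (use that(1) in \<open>auto simp: sinks_def\<close>)
  moreover have "\<exists>y\<in>sinks V A. \<exists>n\<le>4. (x, y) \<in> A ^^ n" if x: "x \<in> V - sinks V A" for x
  proof -
    obtain t where "t \<in> sinks V A"
      using False x by blast
    then obtain n where "n \<le> 2" "(x, t) \<in> A ^^ n"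
      using reaches_sink_in_two[OF _ x] by blast
    with \<open>t \<in> sinks V A\<close> show ?thesis
      by (intro bexI[of _ t] exI[of _ n]) auto
  qed
  ultimately show ?thesis
    by (intro exI[of _ "sinks V A"]) (auto simp: sinks_def)
qed

lemma exists_kH_kernel:
  assumes "5 \<le> k"
  shows "\<exists>S. kH_kernel k V A AH \<rho> S"
proof -
  obtain S where "S \<subseteq> V" and independent: "\<forall>u\<in>S. \<forall>w\<in>S. (u, w) \<in> A\<^sup>* \<longrightarrow> u = w"
    and absorbing: "\<forall>x\<in>V - S. \<exists>y\<in>S. \<exists>n\<le>4. (x, y) \<in> A ^^ n"
    using exists_independent_absorbing_set by blast
  have "kH_kernel k V A AH \<rho> S"
  proof (rule kH_kernelI)
    show "2 \<le> k"
      using assms by simp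
    show "u = w" if "u \<in> S" "w \<in> S" "(u, w) \<in> A\<^sup>*" for u w
      using independent that by blast
    show "\<exists>y\<in>S. \<exists>n<k. (x, y) \<in> A ^^ n" if "x \<in> V - S" for x
    proof -
      obtain y n where "y \<in> S" "n \<le> 4" "(x, y) \<in> A ^^ n"
        using absorbing \<open>x \<in> V - S\<close> by blast
      moreover have "n < k"
        using \<open>n \<le> 4\<close> assms by linarith
      ultimately show ?thesis by blast
    qed
  qed fact
  then show ?thesis by blast
qed

end

theorem theorem25:
  fixes r k :: nat and V :: "'a set" and A :: "('a \<times> 'a) set"
    and VH :: "'c set" and AH :: "('c \<times> 'c) set" and \<rho> :: "'a \<times> 'a \<Rightarrow> 'c"
  assumes "r \<ge> 2"
    and "r_partite_tournament r V A"
    and "H_colored A VH AH \<rho>"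
    and "k \<ge> 5"
  shows "\<exists>S. kH_kernel k V A AH \<rho> S"
proof -
  obtain part :: "'a \<Rightarrow> nat" where "multipartite_tournament V A part"
    using r_partite_tournament_imp_multipartite[OF assms(2)] by blast
  then show ?thesis
    using multipartite_tournament.exists_kH_kernel[OF _ assms(4)] by blast
qed

end
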